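(* Let $\boldsymbol g_1,\dots,\boldsymbol g_m\in\mathbb{Z}[X^{\pm}]^K$, let $\mathcal{M}_{\mathbb{Z}}=\sum_j\mathbb{Z}[X^{\pm}]\boldsymbol g_j$ and $\mathcal{M}=\sum_j\mathbb{R}[X^{\pm}]\boldsymbol g_j$, and let $a_1,\dots,a_K\in\mathbb{Z}^n$ and $I,J\subseteq\{1,\dots,K\}$. Then there exists $\widetilde{\boldsymbol f}\in\mathcal{M}_{\mathbb{Z}}\cap(\mathbb{N}[X^{\pm}]\setminus\{0\})^K$ satisfying $$(O_v\cup J)\cap M_v(I,\boldsymbol f)\neq\emptyset\quad\text{for every }v\in\mathbb{R}^n\setminus\{0\}\qquad(\ast)$$ if and only if there exists $\boldsymbol f\in\mathcal{M}\cap(\mathbb{R}_{\ge0}[X^{\pm}]\setminus\{0\})^K$ satisfying $(\ast)$.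
   Context: $R[X^{\pm}]=R[X_1^{\pm1},\dots,X_n^{\pm1}]$, $X^b=X_1^{b_1}\cdots X_n^{b_n}$. For $f=\sum c_bX^b\neq0$ and $v\in\mathbb{R}^n\setminus\{0\}$, $\deg_v(f)=\max\{v\cdot b:c_b\ne0\}$, $\deg_v(0)=-\infty$. $M_v(I,\boldsymbol f)=\{i\in I:\deg_v(f_i)=\max_{i'\in I}\deg_v(f_{i'})\}$; $O_v=\{i\in\{1,\dots,K\}:a_i\not\perp v\}$. *)

theory Defs
  imports "HOL-Analysis.Analysis" "HOL-Library.Poly_Mapping" "HOL-Library.Extended_Real"
begin

text \<open>Laurent polynomials R[X_1^{+-1},...,X_n^{+-1}] are represented as finitely supported
  functions from exponent vectors in int^n to R; multiplication of poly_mapping is the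
  convolution, i.e. the product of Laurent polynomials (X^b * X^c = X^(b+c)).\<close>

type_synonym ('n, 'r) lpoly = "(int ^ 'n) \<Rightarrow>\<^sub>0 'r"

definition vdot :: "real ^ 'n \<Rightarrow> int ^ 'n \<Rightarrow> real" where
  "vdot v b = (\<Sum>i\<in>UNIV. v $ i * real_of_int (b $ i))"

definition deg_v :: "real ^ 'n \<Rightarrow> ('n, 'r::zero) lpoly \<Rightarrow> ereal" where
  "deg_v v f = (if f = 0 then -\<infinity> else ereal (Max ((\<lambda>b. vdot v b) ` Poly_Mapping.keys f)))"

definition Mv :: "real ^ 'n \<Rightarrow> nat set \<Rightarrow> (nat \<Rightarrow> ('n, 'r::zero) lpoly) \<Rightarrow> nat set" where
  "Mv v I f = {i \<in> I. deg_v v (f i) = Max ((\<lambda>i'. deg_v v (f i')) ` I)}"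

definition Ov :: "nat \<Rightarrow> (nat \<Rightarrow> int ^ 'n) \<Rightarrow> real ^ 'n \<Rightarrow> nat set" where
  "Ov K a v = {i \<in> {1..K}. vdot v (a i) \<noteq> 0}"

definition cond_star :: "nat \<Rightarrow> (nat \<Rightarrow> int ^ 'n) \<Rightarrow> nat set \<Rightarrow> nat set
    \<Rightarrow> (nat \<Rightarrow> ('n, 'r::zero) lpoly) \<Rightarrow> bool" where
  "cond_star K a I J f = (\<forall>v::real ^ 'n. v \<noteq> 0 \<longrightarrow> (Ov K a v \<union> J) \<inter> Mv v I f \<noteq> {})"

definition in_module :: "nat \<Rightarrow> nat \<Rightarrow> (nat \<Rightarrow> nat \<Rightarrow> ('n::finite, 'r::comm_ring_1) lpoly)
    \<Rightarrow> (nat \<Rightarrow> ('n, 'r) lpoly) \<Rightarrow> bool" where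
  "in_module K m g f = (\<exists>c :: nat \<Rightarrow> ('n, 'r) lpoly.
      \<forall>k\<in>{1..K}. f k = (\<Sum>j\<in>{1..m}. c j * g j k))"

definition nonneg_nonzero :: "nat \<Rightarrow> (nat \<Rightarrow> ('n, 'r::{zero,ord}) lpoly) \<Rightarrow> bool" where
  "nonneg_nonzero K f = (\<forall>k\<in>{1..K}. f k \<noteq> 0 \<and> (\<forall>b. Poly_Mapping.lookup (f k) b \<ge> 0))"

end

theory Submission
  imports Defs
begin

text \<open>Nonnegativity and condition \<open>(\<ast>)\<close> depend only on the supports of the components
  \<open>f\<^sub>k\<close>. Writing \<open>f = \<Sum>\<^sub>j c\<^sub>j g\<^sub>j\<close>, every coefficient of \<open>f\<close> is a linear form with integer
  coefficients in the finitely many coefficients of the multipliers \<open>c\<^sub>j\<close>. Requiring the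
  coefficients outside the supports of \<open>f\<close> to vanish and those inside to be positive is thus a
  rational system of linear equations and strict inequalities. It is solved by the coefficients of
  the \<open>c\<^sub>j\<close>, hence has a rational solution, and clearing denominators gives integral multipliers
  producing an element of \<open>\<M>\<^sub>\<int>\<close> with the same supports.\<close>

definition lin_form :: "'v set \<Rightarrow> ('v \<Rightarrow> real) \<Rightarrow> ('v \<Rightarrow> real) \<Rightarrow> real" where
  "lin_form V L y = (\<Sum>v\<in>V. L v * y v)"

lemma lin_form_cong: "(\<And>v. v \<in> V \<Longrightarrow> y v = y' v) \<Longrightarrow> lin_form V L y = lin_form V L y'"
  unfolding lin_form_def by simp

lemma lin_form_scale: "lin_form V L (\<lambda>v. c * y v) = c * lin_form V L y"
  unfolding lin_form_def sum_distrib_left by (simp add: algebra_simps)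

lemma strict_ineqs_rational_solution:
  assumes "finite V" and "finite S" and pos: "\<forall>L\<in>S. lin_form V L x > 0"
  shows "\<exists>y. (\<forall>v\<in>V. y v \<in> \<rat>) \<and> (\<forall>L\<in>S. lin_form V L y > 0)"
proof (cases "S = {}")
  case True
  then show ?thesis by (intro exI[of _ "\<lambda>_. 0"]) auto
next
  case False
  define \<epsilon> where "\<epsilon> = Min ((\<lambda>L. lin_form V L x) ` S)"
  define M where "M = (\<Sum>L\<in>S. \<Sum>v\<in>V. \<bar>L v\<bar>)"
  have "\<epsilon> > 0" using False \<open>finite S\<close> pos unfolding \<epsilon>_def by auto
  have "M \<ge> 0" unfolding M_def by (intro sum_nonneg) auto
  define \<delta> where "\<delta> = \<epsilon> / (M + 1)"
  have "\<delta> > 0" using \<open>\<epsilon> > 0\<close> \<open>M \<ge> 0\<close> unfolding \<delta>_def by auto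
  have "M * \<delta> < \<epsilon>"
    using \<open>\<epsilon> > 0\<close> \<open>M \<ge> 0\<close> unfolding \<delta>_def by (simp add: field_simps)
  have "\<forall>v. \<exists>q\<in>\<rat>. x v < q \<and> q < x v + \<delta>"
    using Rats_dense_in_real \<open>\<delta> > 0\<close> by (metis less_add_same_cancel1)
  then obtain y where y: "\<And>v. y v \<in> \<rat> \<and> x v < y v \<and> y v < x v + \<delta>"
    by metis
  have "lin_form V L y > 0" if "L \<in> S" for L
  proof -
    have "\<bar>lin_form V L y - lin_form V L x\<bar> = \<bar>\<Sum>v\<in>V. L v * (y v - x v)\<bar>"
      unfolding lin_form_def by (simp add: sum_subtractf right_diff_distrib)
    also have "\<dots> \<le> (\<Sum>v\<in>V. \<bar>L v\<bar> * \<delta>)"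
    proof (intro order.trans[OF sum_abs] sum_mono)
      fix v
      have "\<bar>y v - x v\<bar> \<le> \<delta>" using y[of v] by simp
      then show "\<bar>L v * (y v - x v)\<bar> \<le> \<bar>L v\<bar> * \<delta>" by (simp add: abs_mult mult_left_mono)
    qed
    also have "\<dots> \<le> M * \<delta>"
      unfolding M_def sum_distrib_right[symmetric] using \<open>finite S\<close> that \<open>\<delta> > 0\<close>
      by (intro mult_right_mono member_le_sum) (auto intro: sum_nonneg)
    also have "\<dots> < \<epsilon>" by fact
    also have "\<epsilon> \<le> lin_form V L x" unfolding \<epsilon>_def using \<open>finite S\<close> that by auto
    finally show ?thesis by linarith
  qed
  then show ?thesis using y by blast
qed

lemma lin_form_eliminate_var:
  assumes "finite V" and "w \<in> V" and "L0 w \<noteq> 0"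
  shows "lin_form V L (y(w := - lin_form (V - {w}) L0 y / L0 w))
       = lin_form (V - {w}) (\<lambda>v. L v - L w * L0 v / L0 w) y"
proof -
  let ?y' = "y(w := - lin_form (V - {w}) L0 y / L0 w)"
  have "lin_form V L ?y' = L w * ?y' w + lin_form (V - {w}) L ?y'"
    unfolding lin_form_def using assms by (simp add: sum.remove)
  also have "lin_form (V - {w}) L ?y' = lin_form (V - {w}) L y"
    by (rule lin_form_cong) simp
  also have "L w * ?y' w = lin_form (V - {w}) (\<lambda>v. - (L w * L0 v / L0 w)) y"
    unfolding lin_form_def by (simp add: sum_distrib_left sum_divide_distrib sum_negf field_simps)
  finally show ?thesis
    unfolding lin_form_def by (simp add: sum.distrib[symmetric] algebra_simps)
qed

lemma lin_form_solve_var: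
  assumes "finite V" and "w \<in> V" and "L0 w \<noteq> 0" and "lin_form V L0 y = 0"
  shows "y(w := - lin_form (V - {w}) L0 y / L0 w) = y"
proof -
  have "0 = L0 w * y w + lin_form (V - {w}) L0 y"
    using assms unfolding lin_form_def by (simp add: sum.remove)
  then show ?thesis using assms(3) by (auto simp: field_simps)
qed

text \<open>Eliminate the equations one variable at a time (so \<open>E\<close> may be infinite), then perturb into
  the open solution set of the finitely many strict inequalities.\<close>
lemma mixed_system_rational_solution:
  assumes "finite V" and "finite S" and "\<forall>L\<in>E \<union> S. \<forall>v\<in>V. L v \<in> \<rat>"
    and "\<forall>L\<in>E. lin_form V L x = 0" and "\<forall>L\<in>S. lin_form V L x > 0"
  shows "\<exists>y. (\<forall>v\<in>V. y v \<in> \<rat>) \<and> (\<forall>L\<in>E. lin_form V L y = 0) \<and> (\<forall>L\<in>S. lin_form V L y > 0)"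
  using assms
proof (induction "card V" arbitrary: V E S x rule: less_induct)
  case less
  show ?case
  proof (cases "\<exists>L0\<in>E. \<exists>w\<in>V. L0 w \<noteq> 0")
    case False
    then have "\<forall>L\<in>E. lin_form V L y = 0" for y unfolding lin_form_def by auto
    then show ?thesis using strict_ineqs_rational_solution[OF less.prems(1,2,5)] by blast
  next
    case True
    then obtain L0 w where L0: "L0 \<in> E" and w: "w \<in> V" and "L0 w \<noteq> 0" by blast
    define T where "T L = (\<lambda>v. L v - L w * L0 v / L0 w)" for L :: "_ \<Rightarrow> real"
    define ext where "ext y = y(w := - lin_form (V - {w}) L0 y / L0 w)" for y
    have ext: "lin_form V L (ext y) = lin_form (V - {w}) (T L) y" for L y
      unfolding ext_def T_def using less.prems(1) w \<open>L0 w \<noteq> 0\<close> by (rule lin_form_eliminate_var)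
    have "ext x = x"
      unfolding ext_def using less.prems(1,4) w \<open>L0 w \<noteq> 0\<close> L0 by (intro lin_form_solve_var) auto
    then have x: "lin_form (V - {w}) (T L) x = lin_form V L x" for L
      using ext[of L x] by simp
    have "\<forall>L\<in>T ` E \<union> T ` S. \<forall>v\<in>V - {w}. L v \<in> \<rat>"
      using less.prems(3) L0 w unfolding T_def by auto
    moreover have "card (V - {w}) < card V"
      using w less.prems(1) by (meson card_Diff1_less)
    ultimately obtain y where y: "\<forall>v\<in>V - {w}. y v \<in> \<rat>"
      "\<forall>L\<in>T ` E. lin_form (V - {w}) L y = 0" "\<forall>L\<in>T ` S. lin_form (V - {w}) L y > 0"
      using less.hyps[of "V - {w}" "T ` S" "T ` E" x] less.prems x by auto
    have "lin_form (V - {w}) L0 y \<in> \<rat>"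
      unfolding lin_form_def using y(1) less.prems(3) L0 by (intro Rats_sum Rats_mult) auto
    then have "\<forall>v\<in>V. ext y v \<in> \<rat>"
      using y(1) less.prems(3) L0 w unfolding ext_def by (auto intro: Rats_divide)
    then show ?thesis using y ext by (intro exI[of _ "ext y"]) auto
  qed
qed

lemma rational_vector_common_denominator:
  assumes "finite V" and "\<forall>v\<in>V. y v \<in> \<rat>"
  shows "\<exists>D::int. D > 0 \<and> (\<forall>v\<in>V. of_int D * y v \<in> \<int>)"
  using assms
proof (induction V rule: finite_induct)
  case empty
  then show ?case by (intro exI[of _ 1]) auto
next
  case (insert u V)
  then obtain D where D: "D > 0" "\<forall>v\<in>V. of_int D * y v \<in> \<int>" by auto
  obtain p q where "q > 0" and u: "y u = of_int p / of_int q"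
    using insert.prems by (auto elim!: Rats_cases')
  have "of_int (D * q) * y v \<in> \<int>" if "v \<in> insert u V" for v
  proof (cases "v = u")
    case True
    then show ?thesis using \<open>q > 0\<close> u by (simp add: field_simps)
  next
    case False
    then have "of_int q * (of_int D * y v) \<in> \<int>" using D that by auto
    then show ?thesis by (simp add: mult.assoc mult.left_commute)
  qed
  then show ?case using D \<open>q > 0\<close> by (intro exI[of _ "D * q"]) auto
qed

lemma mixed_system_integral_solution:
  assumes "finite V" and "finite S" and "\<forall>L\<in>E \<union> S. \<forall>v\<in>V. L v \<in> \<rat>"
    and "\<forall>L\<in>E. lin_form V L x = 0" and "\<forall>L\<in>S. lin_form V L x > 0"
  shows "\<exists>z::'v \<Rightarrow> int. (\<forall>L\<in>E. lin_form V L (\<lambda>v. of_int (z v)) = 0)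
                       \<and> (\<forall>L\<in>S. lin_form V L (\<lambda>v. of_int (z v)) > 0)"
proof -
  obtain y where y: "\<forall>v\<in>V. y v \<in> \<rat>" "\<forall>L\<in>E. lin_form V L y = 0" "\<forall>L\<in>S. lin_form V L y > 0"
    using mixed_system_rational_solution[OF assms] by blast
  obtain D :: int where "D > 0" and D: "\<forall>v\<in>V. of_int D * y v \<in> \<int>"
    using rational_vector_common_denominator[OF assms(1) y(1)] by blast
  have "\<exists>n::int. of_int n = of_int D * y v" if "v \<in> V" for v
    using D that unfolding Ints_def by (metis rangeE)
  then obtain z where z: "\<forall>v\<in>V. of_int (z v) = of_int D * y v"
    by metis
  have "lin_form V L (\<lambda>v. of_int (z v)) = lin_form V L (\<lambda>v. of_int D * y v)" for L
    by (rule lin_form_cong) (simp add: z)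
  then have "lin_form V L (\<lambda>v. of_int (z v)) = of_int D * lin_form V L y" for L
    by (simp add: lin_form_scale)
  then show ?thesis using y \<open>D > 0\<close> by (intro exI[of _ z]) simp
qed

lemma lookup_map_zero_preserving:
  "h 0 = 0 \<Longrightarrow> Poly_Mapping.lookup (Poly_Mapping.map h p) k = h (Poly_Mapping.lookup p k)"
  by (simp add: Poly_Mapping.map.rep_eq when_def)

lemma keys_map_of_int [simp]:
  "Poly_Mapping.keys (Poly_Mapping.map (of_int :: int \<Rightarrow> 'b::ring_char_0) p) = Poly_Mapping.keys p"
  by (auto simp: in_keys_iff lookup_map_zero_preserving)

lemma poly_mapping_sum_single:
  assumes "finite B" and "Poly_Mapping.keys p \<subseteq> B"
  shows "p = (\<Sum>b\<in>B. Poly_Mapping.single b (Poly_Mapping.lookup p b))"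
  using assms by (intro poly_mapping_eqI) (auto simp: lookup_sum lookup_single when_def in_keys_iff)

lemma map_of_int_sum:
  "Poly_Mapping.map (of_int :: int \<Rightarrow> 'b::ring_1) (sum F A) = (\<Sum>x\<in>A. Poly_Mapping.map of_int (F x))"
  by (rule poly_mapping_eqI) (simp add: lookup_sum lookup_map_zero_preserving)

lemma map_of_int_mult:
  fixes p q :: "('a::comm_monoid_add) \<Rightarrow>\<^sub>0 int"
  shows "Poly_Mapping.map (of_int :: int \<Rightarrow> 'b::ring_1) (p * q)
       = Poly_Mapping.map of_int p * Poly_Mapping.map of_int q"
proof -
  let ?P = "Poly_Mapping.keys p" and ?Q = "Poly_Mapping.keys q"
  let ?c = "Poly_Mapping.lookup"
  have expand: "r = (\<Sum>b\<in>Poly_Mapping.keys r. Poly_Mapping.single b (?c r b))" for r :: "'a \<Rightarrow>\<^sub>0 int"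
    by (rule poly_mapping_sum_single) simp_all
  have map_expand: "Poly_Mapping.map (of_int :: int \<Rightarrow> 'b) r
      = (\<Sum>b\<in>Poly_Mapping.keys r. Poly_Mapping.single b (of_int (?c r b)))" for r :: "'a \<Rightarrow>\<^sub>0 int"
    using arg_cong[OF expand[of r], of "Poly_Mapping.map of_int"] by (simp add: map_of_int_sum)
  have "p * q = (\<Sum>b\<in>?P. Poly_Mapping.single b (?c p b)) * (\<Sum>c\<in>?Q. Poly_Mapping.single c (?c q c))"
    by (rule arg_cong2[where f = "(*)"]) (rule expand)+
  also have "\<dots> = (\<Sum>b\<in>?P. \<Sum>c\<in>?Q. Poly_Mapping.single (b + c) (?c p b * ?c q c))"
    by (simp add: sum_product mult_single)
  finally have "Poly_Mapping.map (of_int :: int \<Rightarrow> 'b) (p * q)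
      = (\<Sum>b\<in>?P. \<Sum>c\<in>?Q. Poly_Mapping.single (b + c) (of_int (?c p b) * of_int (?c q c)))"
    by (simp add: map_of_int_sum)
  then show ?thesis
    unfolding map_expand[of p] map_expand[of q] by (simp add: sum_product mult_single)
qed

lemma lookup_single_mult:
  fixes P :: "('a::comm_monoid_add) \<Rightarrow>\<^sub>0 'b::comm_ring_1"
  shows "Poly_Mapping.lookup (Poly_Mapping.single b x * P) e
       = x * Poly_Mapping.lookup (Poly_Mapping.single b 1 * P) e"
proof -
  have "Poly_Mapping.single b x = Poly_Mapping.single 0 x * Poly_Mapping.single b 1"
    by (simp add: mult_single)
  then have "Poly_Mapping.single b x * P = Poly_Mapping.map ((*) x) (Poly_Mapping.single b 1 * P)"
    by (simp add: mult_map_scale_conv_mult mult.assoc)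
  then show ?thesis by (simp add: lookup_map_zero_preserving)
qed

text \<open>Each coefficient of \<open>\<Sum>j. c j * G j\<close> is a linear form in the coefficients of the
  multipliers \<open>c j\<close>, the variable \<open>(j, b)\<close> standing for the coefficient of \<open>X^b\<close> in \<open>c j\<close>.\<close>
lemma lookup_sum_mult_lin_form:
  fixes G :: "nat \<Rightarrow> ('a::comm_monoid_add) \<Rightarrow>\<^sub>0 real"
  assumes "finite A" and "\<And>j. finite (B j)" and "\<And>j. j \<in> A \<Longrightarrow> Poly_Mapping.keys (c j) \<subseteq> B j"
  shows "Poly_Mapping.lookup (\<Sum>j\<in>A. c j * G j) e
       = lin_form (Sigma A B) (\<lambda>(j, b). Poly_Mapping.lookup (Poly_Mapping.single b 1 * G j) e)
           (\<lambda>(j, b). Poly_Mapping.lookup (c j) b)"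
proof -
  have "(\<Sum>j\<in>A. c j * G j)
      = (\<Sum>j\<in>A. (\<Sum>b\<in>B j. Poly_Mapping.single b (Poly_Mapping.lookup (c j) b)) * G j)"
  proof (rule sum.cong[OF refl])
    fix j assume "j \<in> A"
    show "c j * G j = (\<Sum>b\<in>B j. Poly_Mapping.single b (Poly_Mapping.lookup (c j) b)) * G j"
      using poly_mapping_sum_single[OF assms(2) assms(3)[OF \<open>j \<in> A\<close>]] by (rule arg_cong)
  qed
  moreover have "Poly_Mapping.lookup (Poly_Mapping.single b (Poly_Mapping.lookup (c j) b) * G j) e
      = Poly_Mapping.lookup (Poly_Mapping.single b 1 * G j) e * Poly_Mapping.lookup (c j) b" for j b
    by (subst lookup_single_mult) (rule mult.commute)
  ultimately have "Poly_Mapping.lookup (\<Sum>j\<in>A. c j * G j) e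
      = (\<Sum>j\<in>A. \<Sum>b\<in>B j. Poly_Mapping.lookup (Poly_Mapping.single b 1 * G j) e * Poly_Mapping.lookup (c j) b)"
    by (simp add: sum_distrib_right lookup_sum)
  then show ?thesis
    unfolding lin_form_def using assms(1,2) by (simp add: sum.Sigma split_beta)
qed

definition module_coeff :: "(nat \<Rightarrow> ('a::comm_monoid_add) \<Rightarrow>\<^sub>0 int) \<Rightarrow> 'a \<Rightarrow> nat \<times> 'a \<Rightarrow> real" where
  "module_coeff G e = (\<lambda>(j, b). of_int (Poly_Mapping.lookup (Poly_Mapping.single b 1 * G j) e))"

lemma lookup_real_combination:
  fixes G :: "nat \<Rightarrow> ('a::comm_monoid_add) \<Rightarrow>\<^sub>0 int"
  assumes "finite A" and "\<And>j. finite (B j)" and "\<And>j. j \<in> A \<Longrightarrow> Poly_Mapping.keys (c j) \<subseteq> B j"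
  shows "Poly_Mapping.lookup (\<Sum>j\<in>A. c j * Poly_Mapping.map of_int (G j)) e
       = lin_form (Sigma A B) (module_coeff G e) (\<lambda>(j, b). Poly_Mapping.lookup (c j) b)"
proof -
  have "Poly_Mapping.lookup (Poly_Mapping.single b 1 * Poly_Mapping.map of_int (G j)) e
      = module_coeff G e (j, b)" for j b
  proof -
    have "Poly_Mapping.lookup (Poly_Mapping.single b 1 * Poly_Mapping.map of_int (G j)) e
        = Poly_Mapping.lookup (Poly_Mapping.map of_int (Poly_Mapping.single b 1 * G j)) e"
      by (simp add: map_of_int_mult)
    then show ?thesis
      unfolding module_coeff_def by (simp add: lookup_map_zero_preserving)
  qed
  then show ?thesis
    using lookup_sum_mult_lin_form[OF assms] by (simp add: case_prod_beta')
qed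

lemma lookup_int_combination:
  fixes G :: "nat \<Rightarrow> ('a::comm_monoid_add) \<Rightarrow>\<^sub>0 int"
  assumes "finite A" and "\<And>j. finite (B j)"
  shows "of_int (Poly_Mapping.lookup (\<Sum>j\<in>A. (\<Sum>b\<in>B j. Poly_Mapping.single b (z (j, b))) * G j) e)
       = lin_form (Sigma A B) (module_coeff G e) (\<lambda>v. of_int (z v))"
proof -
  define c where "c j = (\<Sum>b\<in>B j. Poly_Mapping.single b (real_of_int (z (j, b))))" for j
  have keys: "Poly_Mapping.keys (c j) \<subseteq> B j" for j
    unfolding c_def by (rule order.trans[OF keys_sum]) auto
  have lookup_c: "Poly_Mapping.lookup (c j) b = of_int (z (j, b))" if "b \<in> B j" for j b
    unfolding c_def using assms(2) that by (simp add: lookup_sum lookup_single when_def)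
  have "of_int (Poly_Mapping.lookup (\<Sum>j\<in>A. (\<Sum>b\<in>B j. Poly_Mapping.single b (z (j, b))) * G j) e)
      = Poly_Mapping.lookup (\<Sum>j\<in>A. c j * Poly_Mapping.map of_int (G j)) e"
    unfolding c_def
    by (simp add: lookup_map_zero_preserving[symmetric] map_of_int_sum map_of_int_mult)
  also have "\<dots> = lin_form (Sigma A B) (module_coeff G e) (\<lambda>(j, b). Poly_Mapping.lookup (c j) b)"
    using assms keys by (rule lookup_real_combination)
  also have "\<dots> = lin_form (Sigma A B) (module_coeff G e) (\<lambda>v. of_int (z v))"
    by (rule lin_form_cong) (auto simp: lookup_c)
  finally show ?thesis .
qed

lemma cond_star_keys_cong:
  assumes "I \<subseteq> {1..K}" and "\<forall>k\<in>{1..K}. Poly_Mapping.keys (F k) = Poly_Mapping.keys (G k)"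
  shows "cond_star K a I J F \<longleftrightarrow> cond_star K a I J G"
proof -
  have deg: "deg_v v (F i) = deg_v v (G i)" if "i \<in> I" for v i
  proof -
    have "Poly_Mapping.keys (F i) = Poly_Mapping.keys (G i)" using assms that by blast
    then show ?thesis unfolding deg_v_def by (metis keys_eq_empty)
  qed
  then have "(\<lambda>i. deg_v v (F i)) ` I = (\<lambda>i. deg_v v (G i)) ` I" for v
    by (intro image_cong) auto
  then have "Mv v I F = Mv v I G" for v
    unfolding Mv_def using deg by auto
  then show ?thesis unfolding cond_star_def by simp
qed

lemma in_module_map_of_int:
  assumes "in_module K m g f"
  shows "in_module K m (\<lambda>j k. Poly_Mapping.map of_int (g j k)) (\<lambda>k. Poly_Mapping.map of_int (f k))"
proof -
  obtain c where c: "\<forall>k\<in>{1..K}. f k = (\<Sum>j\<in>{1..m}. c j * g j k)"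
    using assms unfolding in_module_def by blast
  have "Poly_Mapping.map of_int (f k)
      = (\<Sum>j\<in>{1..m}. Poly_Mapping.map of_int (c j) * Poly_Mapping.map of_int (g j k))"
    if "k \<in> {1..K}" for k
  proof -
    have "f k = (\<Sum>j\<in>{1..m}. c j * g j k)" using c that by blast
    then show ?thesis by (simp only: map_of_int_sum map_of_int_mult)
  qed
  then show ?thesis
    unfolding in_module_def by (intro exI[of _ "\<lambda>j. Poly_Mapping.map of_int (c j)"]) blast
qed

lemma nonneg_nonzero_iff_keys:
  "nonneg_nonzero K f \<longleftrightarrow>
     (\<forall>k\<in>{1..K}. Poly_Mapping.keys (f k) \<noteq> {} \<and> (\<forall>b. Poly_Mapping.lookup (f k) b \<ge> 0))"
  unfolding nonneg_nonzero_def by simp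

lemma integral_module_element_same_support:
  fixes g :: "nat \<Rightarrow> nat \<Rightarrow> ('n::finite, int) lpoly" and f :: "nat \<Rightarrow> ('n, real) lpoly"
  assumes "in_module K m (\<lambda>j k. Poly_Mapping.map of_int (g j k)) f"
    and nonneg: "\<forall>k\<in>{1..K}. \<forall>e. Poly_Mapping.lookup (f k) e \<ge> 0"
  shows "\<exists>ft. in_module K m g ft \<and> (\<forall>k\<in>{1..K}. Poly_Mapping.keys (ft k) = Poly_Mapping.keys (f k)
                                       \<and> (\<forall>e. Poly_Mapping.lookup (ft k) e \<ge> 0))"
proof -
  obtain c where c: "\<forall>k\<in>{1..K}. f k = (\<Sum>j\<in>{1..m}. c j * Poly_Mapping.map of_int (g j k))"
    using assms(1) unfolding in_module_def by blast
  define V where "V = Sigma {1..m} (\<lambda>j. Poly_Mapping.keys (c j))"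
  define L where "L k e = module_coeff (\<lambda>j. g j k) e" for k e
  define E where "E = {L k e | k e. k \<in> {1..K} \<and> Poly_Mapping.lookup (f k) e = 0}"
  define S where "S = {L k e | k e. k \<in> {1..K} \<and> e \<in> Poly_Mapping.keys (f k)}"
  have coeff_f: "Poly_Mapping.lookup (f k) e = lin_form V (L k e) (\<lambda>(j, b). Poly_Mapping.lookup (c j) b)"
    if "k \<in> {1..K}" for k e
    using c that unfolding V_def L_def by (simp add: lookup_real_combination)
  have "finite V" unfolding V_def by simp
  have "finite S"
  proof -
    have "S = (\<lambda>(k, e). L k e) ` Sigma {1..K} (\<lambda>k. Poly_Mapping.keys (f k))"
      unfolding S_def by force
    then show ?thesis by simp
  qed
  have rational: "\<forall>L'\<in>E \<union> S. \<forall>v\<in>V. L' v \<in> \<rat>"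
    unfolding E_def S_def L_def module_coeff_def by (auto simp: Rats_of_int)
  have eqs: "\<forall>L'\<in>E. lin_form V L' (\<lambda>(j, b). Poly_Mapping.lookup (c j) b) = 0"
    unfolding E_def using coeff_f by auto
  have ineqs: "\<forall>L'\<in>S. lin_form V L' (\<lambda>(j, b). Poly_Mapping.lookup (c j) b) > 0"
  proof
    fix L' assume "L' \<in> S"
    then obtain k e where k: "k \<in> {1..K}" and "Poly_Mapping.lookup (f k) e \<noteq> 0" and "L' = L k e"
      unfolding S_def by (auto simp: in_keys_iff)
    moreover have "Poly_Mapping.lookup (f k) e \<ge> 0" using nonneg k by blast
    ultimately show "lin_form V L' (\<lambda>(j, b). Poly_Mapping.lookup (c j) b) > 0"
      using coeff_f[OF k, of e] by simp
  qed
  obtain z :: "nat \<times> (int ^ 'n) \<Rightarrow> int"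
    where z: "\<forall>L'\<in>E. lin_form V L' (\<lambda>v. of_int (z v)) = 0" "\<forall>L'\<in>S. lin_form V L' (\<lambda>v. of_int (z v)) > 0"
    using mixed_system_integral_solution[OF \<open>finite V\<close> \<open>finite S\<close> rational eqs ineqs] by blast
  define ft where
    "ft k = (\<Sum>j\<in>{1..m}. (\<Sum>b\<in>Poly_Mapping.keys (c j). Poly_Mapping.single b (z (j, b))) * g j k)" for k
  have coeff_ft: "of_int (Poly_Mapping.lookup (ft k) e) = lin_form V (L k e) (\<lambda>v. of_int (z v))" for k e
    unfolding ft_def V_def L_def by (rule lookup_int_combination) auto
  have sign: "(Poly_Mapping.lookup (ft k) e = 0 \<longleftrightarrow> Poly_Mapping.lookup (f k) e = 0)
      \<and> Poly_Mapping.lookup (ft k) e \<ge> 0" if "k \<in> {1..K}" for k e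
  proof (cases "Poly_Mapping.lookup (f k) e = 0")
    case True
    then have "L k e \<in> E" unfolding E_def using that by auto
    then show ?thesis using True z(1) coeff_ft[of k e] by simp
  next
    case False
    then have "L k e \<in> S" unfolding S_def using that by (auto simp: in_keys_iff)
    then have "of_int (Poly_Mapping.lookup (ft k) e) > (0::real)"
      using z(2) coeff_ft[of k e] by simp
    then show ?thesis using False by simp
  qed
  have "in_module K m g ft"
    unfolding in_module_def ft_def
    by (intro exI[of _ "\<lambda>j. \<Sum>b\<in>Poly_Mapping.keys (c j). Poly_Mapping.single b (z (j, b))"]) simp
  then show ?thesis using sign by (auto simp: in_keys_iff)
qed

theorem mainTheorem8:
  fixes K m :: nat
    and g :: "nat \<Rightarrow> nat \<Rightarrow> ('n::finite, int) lpoly"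
    and a :: "nat \<Rightarrow> int ^ 'n"
    and I J :: "nat set"
  assumes "I \<subseteq> {1..K}" and "J \<subseteq> {1..K}"
  shows "(\<exists>ft :: nat \<Rightarrow> ('n, int) lpoly.
            in_module K m g ft \<and> nonneg_nonzero K ft \<and> cond_star K a I J ft)
     \<longleftrightarrow> (\<exists>f :: nat \<Rightarrow> ('n, real) lpoly.
            in_module K m (\<lambda>j k. Poly_Mapping.map real_of_int (g j k)) f
            \<and> nonneg_nonzero K f \<and> cond_star K a I J f)"
proof
  assume "\<exists>ft. in_module K m g ft \<and> nonneg_nonzero K ft \<and> cond_star K a I J ft"
  then obtain ft where ft: "in_module K m g ft" "nonneg_nonzero K ft" "cond_star K a I J ft"
    by blast
  define f where "f k = Poly_Mapping.map real_of_int (ft k)" for k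
  have "in_module K m (\<lambda>j k. Poly_Mapping.map real_of_int (g j k)) f"
    unfolding f_def using ft(1) by (rule in_module_map_of_int)
  moreover have "nonneg_nonzero K f"
    using ft(2) unfolding f_def by (simp add: nonneg_nonzero_iff_keys lookup_map_zero_preserving)
  moreover have "cond_star K a I J f"
    using ft(3) cond_star_keys_cong[OF assms(1), of f ft] unfolding f_def by simp
  ultimately show "\<exists>f. in_module K m (\<lambda>j k. Poly_Mapping.map real_of_int (g j k)) f
      \<and> nonneg_nonzero K f \<and> cond_star K a I J f"
    by blast
next
  assume "\<exists>f. in_module K m (\<lambda>j k. Poly_Mapping.map real_of_int (g j k)) f
      \<and> nonneg_nonzero K f \<and> cond_star K a I J f"
  then obtain f where f: "in_module K m (\<lambda>j k. Poly_Mapping.map real_of_int (g j k)) f"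
    "nonneg_nonzero K f" "cond_star K a I J f"
    by blast
  have "\<forall>k\<in>{1..K}. \<forall>e. Poly_Mapping.lookup (f k) e \<ge> 0"
    using f(2) unfolding nonneg_nonzero_def by blast
  then obtain ft where ft: "in_module K m g ft"
    "\<forall>k\<in>{1..K}. Poly_Mapping.keys (ft k) = Poly_Mapping.keys (f k) \<and> (\<forall>e. Poly_Mapping.lookup (ft k) e \<ge> 0)"
    using integral_module_element_same_support[OF f(1)] by blast
  have "nonneg_nonzero K ft"
    using f(2) ft(2) by (simp add: nonneg_nonzero_iff_keys)
  moreover have "cond_star K a I J ft"
    using f(3) cond_star_keys_cong[OF assms(1), of ft f] ft(2) by simp
  ultimately show "\<exists>ft. in_module K m g ft \<and> nonneg_nonzero K ft \<and> cond_star K a I J ft"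
    using ft(1) by blast
qed

end
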